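(* Suppose that for all positive integers $s,t,k$ with $st \le k^2$ one has $R(s,t) \le R(k,k)$. Suppose moreover that the limit $\lim_{k \to \infty} \frac{\log(R(k,k))}{k}$ exists and equals $\mathcal{L}$. Then \[ f(n) = \big(\mathcal{L}^2 + o(1)\big)\frac{n}{(\log n)^2}, \] that is, $\lim_{n\to\infty} \frac{(\log n)^2}{n} f(n) = \mathcal{L}^2$.
   Context: All logarithms are in base 2. For positive integers $s,t$, the Ramsey number $R(s,t)$ is the minimum $n$ such that every red/blue edge-coloring of the complete graph $K_n$ contains a red clique on $s$ vertices or a blue clique on $t$ vertices. For a graph $G$, $\chi(G)$ is its chromatic number and $\omega(G)$ its clique number. For $n \in \mathbb{N}$, $f(n)$ is the maximum of $\chi(G)/\omega(G)$ over all graphs $G$ on $n$ vertices. Here $o(1)$ denotes a quantity tending to $0$ as $n \to \infty$. *)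

theory Defs
  imports Complex_Main
begin

definition ramsey_number :: "nat \<Rightarrow> nat \<Rightarrow> nat" where
  "ramsey_number s t = (LEAST n. \<forall>c :: nat \<Rightarrow> nat \<Rightarrow> bool. (\<forall>x y. c x y = c y x) \<longrightarrow>
      (\<exists>S. S \<subseteq> {0..<n} \<and> card S = s \<and> (\<forall>x\<in>S. \<forall>y\<in>S. x \<noteq> y \<longrightarrow> c x y)) \<or>
      (\<exists>S. S \<subseteq> {0..<n} \<and> card S = t \<and> (\<forall>x\<in>S. \<forall>y\<in>S. x \<noteq> y \<longrightarrow> \<not> c x y)))"

definition graph_on :: "nat \<Rightarrow> (nat \<times> nat) set \<Rightarrow> bool" where
  "graph_on n E \<longleftrightarrow> E \<subseteq> {0..<n} \<times> {0..<n} \<and> sym E \<and> irrefl E"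

definition clique_in :: "nat \<Rightarrow> (nat \<times> nat) set \<Rightarrow> nat set \<Rightarrow> bool" where
  "clique_in n E S \<longleftrightarrow> S \<subseteq> {0..<n} \<and> (\<forall>x\<in>S. \<forall>y\<in>S. x \<noteq> y \<longrightarrow> (x, y) \<in> E)"

definition clique_number :: "nat \<Rightarrow> (nat \<times> nat) set \<Rightarrow> nat" where
  "clique_number n E = Max {card S | S. clique_in n E S}"

definition proper_colouring :: "nat \<Rightarrow> (nat \<times> nat) set \<Rightarrow> nat \<Rightarrow> (nat \<Rightarrow> nat) \<Rightarrow> bool" where
  "proper_colouring n E k col \<longleftrightarrow> (\<forall>v<n. col v < k) \<and> (\<forall>(x, y)\<in>E. col x \<noteq> col y)"

definition chromatic_number :: "nat \<Rightarrow> (nat \<times> nat) set \<Rightarrow> nat" where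
  "chromatic_number n E = (LEAST k. \<exists>col. proper_colouring n E k col)"

definition f_ratio :: "nat \<Rightarrow> real" where
  "f_ratio n = Max {real (chromatic_number n E) / real (clique_number n E) | E. graph_on n E}"

end

theory Submission
  imports Defs "HOL-Real_Asymp.Real_Asymp"
begin

(* Lower bound: for n < R(k+1,k+1) some colouring of K_n has no monochromatic (k+1)-clique; its
   red graph has clique number at most k and no independent set of size k+1, so chi >= n/k and
   f(n) >= n/k^2.  Taking k maximal with R(k,k) <= n gives (log n)^2 f(n)/n >= (log R(k,k)/k)^2,
   which tends to L^2.

   Upper bound: if every set of at least M vertices contains an independent t-set, colouring
   greedily uses at most n/t + M colours, and Ramsey's theorem allows M = R(omega+1, t).  If
   omega >= (log n)^2/A for a constant A below the target, simply use chi <= n; if omega <= T,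
   take t = k^3, so that M is polylogarithmic; otherwise take t about k^2/(omega+1), so that the
   hypothesis gives M <= R(k,k) while chi/omega <= (1+1/T)^2 n/k^2 + M.  With k about
   (1-1/T) log n/(L+1/T) we get R(k,k) <= n^(1-1/T), hence
   (log n)^2 f(n)/n <= ((1+1/T)(L+1/T)/(1-1/T))^2 + o(1) for every T. *)

section \<open>Ramsey numbers\<close>

definition mono_clique :: "(nat \<Rightarrow> nat \<Rightarrow> bool) \<Rightarrow> bool \<Rightarrow> nat set \<Rightarrow> bool" where
  "mono_clique c b S \<longleftrightarrow> (\<forall>x\<in>S. \<forall>y\<in>S. x \<noteq> y \<longrightarrow> c x y = b)"

definition red_or_blue_clique :: "nat \<Rightarrow> nat \<Rightarrow> nat set \<Rightarrow> (nat \<Rightarrow> nat \<Rightarrow> bool) \<Rightarrow> bool" where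
  "red_or_blue_clique s t V c \<longleftrightarrow>
     (\<exists>S\<subseteq>V. card S = s \<and> mono_clique c True S) \<or> (\<exists>S\<subseteq>V. card S = t \<and> mono_clique c False S)"

lemma ramsey_number_altdef:
  "ramsey_number s t = (LEAST n. \<forall>c. symp c \<longrightarrow> red_or_blue_clique s t {0..<n} c)"
proof -
  have "symp c \<longleftrightarrow> (\<forall>x y. c x y = c y x)" for c :: "nat \<Rightarrow> nat \<Rightarrow> bool"
    by (auto simp: symp_def)
  then show ?thesis
    unfolding ramsey_number_def red_or_blue_clique_def mono_clique_def by simp
qed

lemma mono_clique_subset: "mono_clique c b S \<Longrightarrow> T \<subseteq> S \<Longrightarrow> mono_clique c b T"
  unfolding mono_clique_def by blast

lemma mono_clique_insert:
  assumes "symp c" "mono_clique c b S" "\<forall>y\<in>S. c v y = b"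
  shows "mono_clique c b (insert v S)"
  using assms unfolding mono_clique_def by (metis insert_iff sympD)

lemma red_or_blue_clique_mono:
  "red_or_blue_clique s t V c \<Longrightarrow> V \<subseteq> W \<Longrightarrow> red_or_blue_clique s t W c"
  unfolding red_or_blue_clique_def by blast

lemma red_or_blue_cliqueI:
  "S \<subseteq> V \<Longrightarrow> card S = s \<Longrightarrow> mono_clique c True S \<Longrightarrow> red_or_blue_clique s t V c"
  "S \<subseteq> V \<Longrightarrow> card S = t \<Longrightarrow> mono_clique c False S \<Longrightarrow> red_or_blue_clique s t V c"
  unfolding red_or_blue_clique_def by blast+

lemma red_or_blue_clique_swap:
  "red_or_blue_clique s t V (\<lambda>x y. \<not> c x y) \<longleftrightarrow> red_or_blue_clique t s V c"
  unfolding red_or_blue_clique_def mono_clique_def by auto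

lemma red_or_blue_clique_insert_red:
  assumes "symp c" "finite V" "v \<in> V" "red_or_blue_clique s t {y \<in> V - {v}. c v y} c"
  shows "red_or_blue_clique (Suc s) t V c"
proof -
  from assms(4) consider
      S where "S \<subseteq> {y \<in> V - {v}. c v y}" "card S = s" "mono_clique c True S"
    | S where "S \<subseteq> V" "card S = t" "mono_clique c False S"
    unfolding red_or_blue_clique_def by blast
  then show ?thesis
  proof cases
    case (1 S)
    then have "finite S" "v \<notin> S" "insert v S \<subseteq> V"
      using assms(2,3) by (auto intro: rev_finite_subset)
    moreover have "mono_clique c True (insert v S)"
      using 1 assms(1) by (auto intro: mono_clique_insert)
    ultimately show ?thesis
      using 1(2) by (intro red_or_blue_cliqueI(1)[of "insert v S"]) auto
  qed (rule red_or_blue_cliqueI(2))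
qed

text \<open>Split the vertices other than \<open>v\<close> by the colour of their edge to \<open>v\<close>; by Pascal's rule one
  side is large enough for the induction hypothesis.  The blue side reduces to the red one by
  swapping the colours.\<close>
lemma red_or_blue_clique_if_binomial_le:
  assumes "symp c" "finite V" "(s + t) choose s \<le> card V"
  shows "red_or_blue_clique s t V c"
  using assms
proof (induction "s + t" arbitrary: s t V c rule: less_induct)
  case less
  show ?case
  proof (cases "s = 0 \<or> t = 0")
    case True
    then show ?thesis
      using red_or_blue_cliqueI[of "{}" V] by (auto simp: mono_clique_def)
  next
    case False
    then obtain s' t' where s: "s = Suc s'" and t: "t = Suc t'"
      by (meson not0_implies_Suc)
    have pascal: "(s + t) choose s = ((s' + t) choose s') + ((s + t') choose s)"
      using s t by simp
    then obtain v where v: "v \<in> V"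
      using less.prems(3) zero_less_binomial[of s' "s' + t"] by fastforce
    let ?red = "{y \<in> V - {v}. c v y}" and ?blue = "{y \<in> V - {v}. \<not> c v y}"
    have "?red \<union> ?blue = V - {v}" "?red \<inter> ?blue = {}" "finite ?red" "finite ?blue"
      using less.prems(2) by auto
    then have "card ?red + card ?blue = card V - 1"
      using card_Un_disjoint[of ?red ?blue] less.prems(2) v by simp
    then consider "(s' + t) choose s' \<le> card ?red" | "(t' + s) choose t' \<le> card ?blue"
      using less.prems(3) pascal binomial_symmetric[of s "s + t'"] by (fastforce simp: add.commute)
    then show ?thesis
    proof cases
      case 1
      then show ?thesis
        using less.hyps[of s' t] less.prems(1) \<open>finite ?red\<close> s v
        by (auto intro: red_or_blue_clique_insert_red[OF less.prems(1,2) v])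
    next
      case 2
      have "symp (\<lambda>x y. \<not> c x y)"
        using less.prems(1) by (auto simp: symp_def)
      with 2 have "red_or_blue_clique t' s ?blue (\<lambda>x y. \<not> c x y)"
        using less.hyps[of t' s] \<open>finite ?blue\<close> t by simp
      then have "red_or_blue_clique (Suc t') s V (\<lambda>x y. \<not> c x y)"
        using red_or_blue_clique_insert_red[OF \<open>symp (\<lambda>x y. \<not> c x y)\<close> less.prems(2) v] by simp
      then show ?thesis
        using red_or_blue_clique_swap t by simp
    qed
  qed
qed

lemma red_or_blue_clique_at_binomial:
  "\<forall>c. symp c \<longrightarrow> red_or_blue_clique s t {0..<(s + t) choose s} c"
  by (simp add: red_or_blue_clique_if_binomial_le)

lemma ramsey_number_le_binomial: "ramsey_number s t \<le> (s + t) choose s"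
  unfolding ramsey_number_altdef by (rule Least_le) (rule red_or_blue_clique_at_binomial)

lemma ramsey_number_le_power_left: "ramsey_number s t \<le> (s + t) ^ s"
  using ramsey_number_le_binomial binomial_le_pow le_add1 order_trans by blast

lemma ramsey_number_le_power_right: "ramsey_number s t \<le> (s + t) ^ t"
  using ramsey_number_le_binomial[of s t] binomial_symmetric[of s "s + t"]
    binomial_le_pow[of t "s + t"] by simp

lemma red_or_blue_clique_ramsey_number:
  assumes "symp c"
  shows "red_or_blue_clique s t {0..<ramsey_number s t} c"
proof -
  have "\<exists>n. \<forall>c. symp c \<longrightarrow> red_or_blue_clique s t {0..<n} c"
    using red_or_blue_clique_at_binomial by blast
  from LeastI_ex[OF this] show ?thesis
    unfolding ramsey_number_altdef using assms by blast
qed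

lemma ex_colouring_below_ramsey_number:
  "n < ramsey_number s t \<Longrightarrow> \<exists>c. symp c \<and> \<not> red_or_blue_clique s t {0..<n} c"
  unfolding ramsey_number_altdef using not_less_Least by blast

lemma ramsey_number_diag_ge: "k \<le> ramsey_number k k"
proof -
  obtain S where "S \<subseteq> {0..<ramsey_number k k}" "card S = k"
    using red_or_blue_clique_ramsey_number[of "\<lambda>_ _. True" k k]
    unfolding red_or_blue_clique_def mono_clique_def by (auto simp: symp_def)
  then show ?thesis
    using card_mono[of "{0..<ramsey_number k k}" S] by simp
qed

lemma red_or_blue_clique_image:
  assumes "inj_on g V" "red_or_blue_clique s t V (\<lambda>x y. c (g x) (g y))"
  shows "red_or_blue_clique s t (g ` V) c"
proof -
  have "card (g ` S) = card S" "mono_clique c b (g ` S) = mono_clique (\<lambda>x y. c (g x) (g y)) b S"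
    if "S \<subseteq> V" for S b
    using inj_on_subset[OF assms(1) that]
    by (auto simp: card_image mono_clique_def inj_on_eq_iff)
  then show ?thesis
    using assms(2) unfolding red_or_blue_clique_def by (metis image_mono)
qed

lemma red_or_blue_clique_if_ramsey_number_le:
  assumes "symp c" "finite V" "ramsey_number s t \<le> card V"
  shows "red_or_blue_clique s t V c"
proof -
  obtain V' where V': "V' \<subseteq> V" "card V' = ramsey_number s t"
    using obtain_subset_with_card_n[OF assms(3)] by blast
  then obtain g where g: "bij_betw g {0..<ramsey_number s t} V'"
    using ex_bij_betw_nat_finite[of V'] finite_subset[OF _ assms(2)] by metis
  have "symp (\<lambda>x y. c (g x) (g y))"
    using assms(1) by (simp add: symp_def)
  then have "red_or_blue_clique s t V' c"
    using red_or_blue_clique_image[of g] red_or_blue_clique_ramsey_number g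
    by (metis bij_betw_def)
  then show ?thesis
    using V'(1) red_or_blue_clique_mono by blast
qed

section \<open>Cliques, colourings and the ratio \<open>f\<close>\<close>

definition independent_in :: "(nat \<times> nat) set \<Rightarrow> nat set \<Rightarrow> bool" where
  "independent_in E I \<longleftrightarrow> (\<forall>x\<in>I. \<forall>y\<in>I. (x, y) \<notin> E)"

lemma finite_graphs_on: "finite {E. graph_on n E}"
  by (rule finite_subset[of _ "Pow ({0..<n} \<times> {0..<n})"]) (auto simp: graph_on_def)

lemma graph_on_empty: "graph_on n {}"
  by (simp add: graph_on_def sym_def irrefl_def)

lemma f_ratio_attained:
  "\<exists>E. graph_on n E \<and> f_ratio n = real (chromatic_number n E) / real (clique_number n E)"
proof -
  let ?ratios = "{real (chromatic_number n E) / real (clique_number n E) | E. graph_on n E}"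
  have "finite ?ratios" "?ratios \<noteq> {}"
    using finite_graphs_on graph_on_empty by auto
  from Max_in[OF this] show ?thesis
    unfolding f_ratio_def by auto
qed

lemma ratio_le_f_ratio:
  "graph_on n E \<Longrightarrow> real (chromatic_number n E) / real (clique_number n E) \<le> f_ratio n"
  unfolding f_ratio_def using finite_graphs_on by (intro Max_ge) auto

lemma finite_clique_sizes: "finite {card S | S. clique_in n E S}"
  by (rule finite_subset[of _ "{..n}"])
    (auto simp: clique_in_def dest: card_mono[OF finite_atLeastLessThan])

lemma card_le_clique_number: "clique_in n E S \<Longrightarrow> card S \<le> clique_number n E"
  unfolding clique_number_def using finite_clique_sizes by (intro Max_ge) auto

lemma clique_number_le:
  assumes "\<And>S. clique_in n E S \<Longrightarrow> card S \<le> k"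
  shows "clique_number n E \<le> k"
proof -
  have "clique_in n E {}"
    by (simp add: clique_in_def)
  then show ?thesis
    unfolding clique_number_def using finite_clique_sizes assms by (subst Max_le_iff) auto
qed

lemma clique_number_pos: "0 < n \<Longrightarrow> 0 < clique_number n E"
  using card_le_clique_number[of n E "{0}"] by (simp add: clique_in_def)

lemma chromatic_number_le: "proper_colouring n E k col \<Longrightarrow> chromatic_number n E \<le> k"
  unfolding chromatic_number_def by (rule Least_le) blast

lemma proper_colouring_identity: "graph_on n E \<Longrightarrow> proper_colouring n E n id"
  by (auto simp: proper_colouring_def graph_on_def irrefl_def)

lemma chromatic_number_le_card: "graph_on n E \<Longrightarrow> chromatic_number n E \<le> n"
  using chromatic_number_le proper_colouring_identity by blast

lemma ex_proper_colouring_chromatic_number: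
  assumes "graph_on n E"
  shows "\<exists>col. proper_colouring n E (chromatic_number n E) col"
  unfolding chromatic_number_def
  by (rule LeastI_ex) (use proper_colouring_identity[OF assms] in blast)

lemma card_le_chromatic_number_mult:
  assumes "graph_on n E" and independent_le: "\<And>I. I \<subseteq> {0..<n} \<Longrightarrow> independent_in E I \<Longrightarrow> card I \<le> k"
  shows "n \<le> chromatic_number n E * k"
proof -
  obtain col where col: "proper_colouring n E (chromatic_number n E) col"
    using ex_proper_colouring_chromatic_number[OF assms(1)] by blast
  define C where "C i = {v \<in> {0..<n}. col v = i}" for i
  have "independent_in E (C i)" for i
    using col by (fastforce simp: C_def independent_in_def proper_colouring_def)
  then have card_C: "card (C i) \<le> k" for i
    by (intro independent_le) (auto simp: C_def)
  have "{0..<n} = (\<Union>i<chromatic_number n E. C i)"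
    using col by (auto simp: C_def proper_colouring_def)
  then have "n = card (\<Union>i<chromatic_number n E. C i)"
    by (metis card_atLeastLessThan diff_zero)
  also have "\<dots> \<le> (\<Sum>i<chromatic_number n E. card (C i))"
    by (rule card_UN_le) simp
  also have "\<dots> \<le> chromatic_number n E * k"
    using sum_mono[of "{..<chromatic_number n E}" "\<lambda>i. card (C i)" "\<lambda>_. k", OF card_C] by simp
  finally show ?thesis .
qed

lemma mono_clique_card_le:
  assumes "\<not> red_or_blue_clique (Suc k) (Suc k) V c" "S \<subseteq> V" "mono_clique c b S"
  shows "card S \<le> k"
proof (rule ccontr)
  assume "\<not> card S \<le> k"
  then obtain T where T: "T \<subseteq> S" "card T = Suc k"
    using obtain_subset_with_card_n[of "Suc k" S] by auto
  then have "T \<subseteq> V" "mono_clique c b T"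
    using assms(2,3) mono_clique_subset by auto
  then show False
    using assms(1) T(2) unfolding red_or_blue_clique_def by (cases b) auto
qed

lemma f_ratio_ge_below_ramsey_number:
  assumes "0 < n" "0 < k" "n < ramsey_number (Suc k) (Suc k)"
  shows "real n / (real k)^2 \<le> f_ratio n"
proof -
  obtain c where "symp c" and no_clique: "\<not> red_or_blue_clique (Suc k) (Suc k) {0..<n} c"
    using ex_colouring_below_ramsey_number[OF assms(3)] by blast
  define E where "E = {(x, y). x < n \<and> y < n \<and> x \<noteq> y \<and> c x y}"
  have G: "graph_on n E"
    using \<open>symp c\<close> by (auto simp: graph_on_def E_def sym_def irrefl_def dest: sympD)
  have "clique_in n E S \<Longrightarrow> mono_clique c True S" for S
    by (auto simp: clique_in_def mono_clique_def E_def)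
  then have omega: "clique_number n E \<le> k"
    using mono_clique_card_le[OF no_clique] by (meson clique_in_def clique_number_le)
  have "S \<subseteq> {0..<n} \<Longrightarrow> independent_in E S \<Longrightarrow> mono_clique c False S" for S
    by (auto simp: independent_in_def mono_clique_def E_def subset_iff)
  then have "n \<le> chromatic_number n E * k"
    using mono_clique_card_le[OF no_clique] by (intro card_le_chromatic_number_mult[OF G]) blast
  then have "real n / (real k)^2 \<le> real (chromatic_number n E) / real k"
    using assms(2) by (simp add: field_simps power2_eq_square flip: of_nat_mult)
  also have "\<dots> \<le> real (chromatic_number n E) / real (clique_number n E)"
    using omega clique_number_pos[OF assms(1), of E] by (intro divide_left_mono) auto
  also have "\<dots> \<le> f_ratio n"
    using ratio_le_f_ratio[OF G] .
  finally show ?thesis .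
qed

section \<open>Colouring via independent sets\<close>

definition proper_colouring_on :: "(nat \<times> nat) set \<Rightarrow> nat set \<Rightarrow> nat \<Rightarrow> (nat \<Rightarrow> nat) \<Rightarrow> bool" where
  "proper_colouring_on E V K col \<longleftrightarrow>
     (\<forall>v\<in>V. col v < K) \<and> (\<forall>x\<in>V. \<forall>y\<in>V. (x, y) \<in> E \<longrightarrow> col x \<noteq> col y)"

lemma proper_colouring_on_injective:
  assumes "irrefl E" "finite V" "card V \<le> K"
  shows "\<exists>col. proper_colouring_on E V K col"
proof -
  obtain g where g: "bij_betw g V {0..<card V}"
    using ex_bij_betw_finite_nat[OF assms(2)] by blast
  have "g v < K" if "v \<in> V" for v
    using bij_betwE[OF g] that assms(3) by (meson atLeastLessThan_iff order_less_le_trans)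
  moreover have "g x \<noteq> g y" if "x \<in> V" "y \<in> V" "(x, y) \<in> E" for x y
  proof -
    have "x \<noteq> y"
      using assms(1) that(3) by (auto simp: irrefl_def)
    then show ?thesis
      using that(1,2) bij_betw_imp_inj_on[OF g] by (simp add: inj_on_eq_iff)
  qed
  ultimately show ?thesis
    unfolding proper_colouring_on_def by blast
qed

lemma proper_colouring_on_add_class:
  assumes "proper_colouring_on E (V - I) K col" "independent_in E I"
  shows "proper_colouring_on E V (Suc K) (\<lambda>v. if v \<in> I then K else col v)"
  unfolding proper_colouring_on_def
proof (intro conjI ballI impI)
  have less: "col v < K" if "v \<in> V" "v \<notin> I" for v
    using assms(1) that by (simp add: proper_colouring_on_def)
  fix x
  assume "x \<in> V"
  then show "(if x \<in> I then K else col x) < Suc K"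
    using less[of x] by (simp add: less_SucI)
  fix y
  assume "y \<in> V" "(x, y) \<in> E"
  then show "(if x \<in> I then K else col x) \<noteq> (if y \<in> I then K else col y)"
    using assms less[of x] less[of y] \<open>x \<in> V\<close>
    by (auto simp: proper_colouring_on_def independent_in_def)
qed

lemma greedy_colouring:
  assumes "irrefl E" "0 < t" "finite V"
    and "\<And>U. U \<subseteq> V \<Longrightarrow> M \<le> card U \<Longrightarrow> \<exists>I\<subseteq>U. card I = t \<and> independent_in E I"
  shows "\<exists>col. proper_colouring_on E V (card V div t + M) col"
  using assms(3,4)
proof (induction "card V" arbitrary: V rule: less_induct)
  case less
  show ?case
  proof (cases "M \<le> card V")
    case True
    then obtain I where I: "I \<subseteq> V" "card I = t" "independent_in E I"
      using less.prems(2) by blast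
    moreover have "finite I"
      using I(1) less.prems(1) finite_subset by blast
    ultimately have "card (V - I) = card V - t" "t \<le> card V"
      using less.prems(1) by (auto simp: card_Diff_subset card_mono)
    then have card_diff: "card (V - I) < card V" "card V div t = Suc (card (V - I) div t)"
      using assms(2) le_div_geq[of t "card V"] by auto
    have "\<exists>I'\<subseteq>U. card I' = t \<and> independent_in E I'" if "U \<subseteq> V - I" "M \<le> card U" for U
      using less.prems(2) that by blast
    then obtain col where "proper_colouring_on E (V - I) (card (V - I) div t + M) col"
      using less.hyps[OF card_diff(1)] less.prems(1) by blast
    from proper_colouring_on_add_class[OF this I(3)] show ?thesis
      using card_diff(2) by auto
  next
    case False
    then show ?thesis
      using proper_colouring_on_injective[OF assms(1) less.prems(1)] by simp
  qed
qed

lemma chromatic_number_le_greedy: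
  assumes "graph_on n E" "0 < t"
    and "\<And>U. U \<subseteq> {0..<n} \<Longrightarrow> M \<le> card U \<Longrightarrow> \<exists>I\<subseteq>U. card I = t \<and> independent_in E I"
  shows "chromatic_number n E \<le> n div t + M"
proof -
  obtain col where "proper_colouring_on E {0..<n} (n div t + M) col"
    using greedy_colouring[of E t "{0..<n}" M] assms by (auto simp: graph_on_def)
  then have "proper_colouring n E (n div t + M) col"
    using assms(1) by (fastforce simp: proper_colouring_def proper_colouring_on_def graph_on_def)
  then show ?thesis
    by (rule chromatic_number_le)
qed

lemma ex_independent_if_ramsey_number_le:
  assumes G: "graph_on n E" and "U \<subseteq> {0..<n}"
    and "ramsey_number (Suc (clique_number n E)) t \<le> card U"
  shows "\<exists>I\<subseteq>U. card I = t \<and> independent_in E I"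
proof -
  let ?c = "\<lambda>x y. (x, y) \<in> E"
  have "symp ?c"
    using G by (auto simp: graph_on_def sym_def symp_def)
  then have "red_or_blue_clique (Suc (clique_number n E)) t U ?c"
    using assms(2,3) finite_subset by (blast intro: red_or_blue_clique_if_ramsey_number_le)
  moreover have "card S \<le> clique_number n E" if "S \<subseteq> U" "mono_clique ?c True S" for S
    using assms(2) that by (intro card_le_clique_number) (auto simp: clique_in_def mono_clique_def)
  moreover have "independent_in E S" if "mono_clique ?c False S" for S
    unfolding independent_in_def
  proof (intro ballI)
    fix x y assume "x \<in> S" "y \<in> S"
    then show "(x, y) \<notin> E"
      using that G by (cases "x = y") (auto simp: mono_clique_def graph_on_def irrefl_def)
  qed
  ultimately show ?thesis
    unfolding red_or_blue_clique_def by (metis Suc_n_not_le_n)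
qed

lemma chromatic_number_le_ramsey_number:
  assumes "graph_on n E" "0 < t"
  shows "chromatic_number n E \<le> n div t + ramsey_number (Suc (clique_number n E)) t"
  using chromatic_number_le_greedy[OF assms ex_independent_if_ramsey_number_le[OF assms(1)]] .

lemma real_chromatic_number_le_ramsey_number:
  assumes "graph_on n E" "0 < t" "ramsey_number (Suc (clique_number n E)) t \<le> M"
  shows "real (chromatic_number n E) \<le> real n / real t + real M"
proof -
  have "real (chromatic_number n E) \<le> real (n div t) + real M"
    using chromatic_number_le_ramsey_number[OF assms(1,2)] assms(3) by linarith
  also have "real (n div t) \<le> real n / real t"
    by (rule of_nat_div_le_of_nat)
  finally show ?thesis
    by simp
qed

lemma add_one_le_mult_one_plus_inverse:
  fixes a T :: real
  assumes "0 < T" "T \<le> a"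
  shows "a + 1 \<le> (1 + 1 / T) * a"
proof -
  have "1 \<le> a / T"
    using assms by simp
  then show ?thesis
    by (simp add: algebra_simps)
qed

lemma sq_le_mult_if_div_le:
  fixes k t w T :: nat
  assumes "0 < T" "T \<le> t" "T \<le> w" "k^2 div (w + 1) \<le> t"
  shows "(real k)^2 \<le> (1 + 1 / real T)^2 * (real t * real w)"
proof -
  have "k^2 < (k^2 div (w + 1) + 1) * (w + 1)"
    using dividend_less_div_times[of "w + 1" "k^2"] by (simp add: algebra_simps)
  also have "\<dots> \<le> (t + 1) * (w + 1)"
    using assms(4) by (intro mult_le_mono1) simp
  finally have "real (k^2) < real ((t + 1) * (w + 1))"
    by (simp only: of_nat_less_iff)
  then have "(real k)^2 < (real t + 1) * (real w + 1)"
    by (simp add: algebra_simps)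
  also have "\<dots> \<le> ((1 + 1 / real T) * real t) * ((1 + 1 / real T) * real w)"
    using assms(1-3) by (intro mult_mono add_one_le_mult_one_plus_inverse) auto
  finally show ?thesis
    by (simp add: power2_eq_square algebra_simps)
qed

lemma chromatic_div_clique_number_le_small_clique:
  assumes G: "graph_on n E" and "0 < n" "0 < t" "clique_number n E \<le> T"
  shows "real (chromatic_number n E) / real (clique_number n E)
    \<le> real n / real t + real ((T + 1 + t) ^ (T + 1))"
proof -
  let ?w = "clique_number n E"
  have "ramsey_number (Suc ?w) t \<le> (Suc ?w + t) ^ Suc ?w"
    by (rule ramsey_number_le_power_left)
  also have "\<dots> \<le> (T + 1 + t) ^ Suc ?w"
    using assms(4) by (intro power_mono) auto
  also have "\<dots> \<le> (T + 1 + t) ^ (T + 1)"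
    using assms(4) by (intro power_increasing) auto
  finally have "real (chromatic_number n E) \<le> real n / real t + real ((T + 1 + t) ^ (T + 1))"
    using real_chromatic_number_le_ramsey_number[OF G assms(3)] by blast
  moreover have "real (chromatic_number n E) / real ?w \<le> real (chromatic_number n E) / 1"
    using clique_number_pos[OF assms(2), of E] by (intro divide_left_mono) auto
  ultimately show ?thesis
    by simp
qed

lemma ramsey_number_max_le:
  assumes "\<forall>s t. 0 < s \<longrightarrow> 0 < t \<longrightarrow> s * t \<le> k^2 \<longrightarrow> ramsey_number s t \<le> ramsey_number k k"
    and "0 < T"
  shows "ramsey_number (Suc w) (max T (k^2 div (w + 1))) \<le> ramsey_number k k + (w + 1 + T) ^ T"
proof (cases "T \<le> k^2 div (w + 1)")
  case True
  then have "(w + 1) * max T (k^2 div (w + 1)) \<le> k^2"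
    by (metis div_times_less_eq_dividend max.absorb2 mult.commute)
  then show ?thesis
    using assms by (simp add: trans_le_add1)
next
  case False
  then show ?thesis
    using ramsey_number_le_power_right[of "Suc w" T] by (simp add: trans_le_add2)
qed

text \<open>Here \<open>t = max T \<lfloor>k\<^sup>2 / (\<omega> + 1)\<rfloor>\<close>: either \<open>(\<omega> + 1) t \<le> k\<^sup>2\<close> and the hypothesis bounds
  \<open>R(\<omega> + 1, t)\<close> by \<open>R(k, k)\<close>, or \<open>t = T\<close> and the binomial bound applies; in both cases
  \<open>k\<^sup>2 < (t + 1)(\<omega> + 1) \<le> (1 + 1/T)\<^sup>2 t \<omega>\<close>.\<close>
lemma chromatic_div_clique_number_le_medium_clique:
  assumes G: "graph_on n E" and "0 < n" "0 < k" "0 < T" "T < clique_number n E"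
    and ramsey_le_diagonal: "\<forall>s t. 0 < s \<longrightarrow> 0 < t \<longrightarrow> s * t \<le> k^2 \<longrightarrow>
      ramsey_number s t \<le> ramsey_number k k"
  shows "real (chromatic_number n E) / real (clique_number n E)
    \<le> (1 + 1 / real T)^2 * real n / (real k)^2 + real (ramsey_number k k)
       + real ((clique_number n E + 1 + T) ^ T)"
proof -
  let ?w = "clique_number n E" and ?\<chi> = "chromatic_number n E"
  define t where "t = max T (k^2 div (?w + 1))"
  define M where "M = ramsey_number k k + (?w + 1 + T) ^ T"
  have "0 < t"
    using assms(4) by (simp add: t_def)
  have "ramsey_number (Suc ?w) t \<le> M"
    unfolding t_def M_def using ramsey_le_diagonal assms(4) by (rule ramsey_number_max_le)
  then have chi_le: "real ?\<chi> \<le> real n / real t + real M"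
    using real_chromatic_number_le_ramsey_number[OF G \<open>0 < t\<close>] by blast
  have k_sq: "(real k)^2 \<le> (1 + 1 / real T)^2 * (real t * real ?w)"
    using assms(4,5) by (intro sq_le_mult_if_div_le) (auto simp: t_def)
  have w_pos: "0 < real ?w"
    using assms(5) by simp
  have "real ?\<chi> / real ?w \<le> (real n / real t + real M) / real ?w"
    using chi_le w_pos by (simp add: divide_right_mono)
  also have "\<dots> = real n / (real t * real ?w) + real M / real ?w"
    by (simp add: add_divide_distrib)
  also have "real n / (real t * real ?w)
      = (1 + 1 / real T)^2 * real n / ((1 + 1 / real T)^2 * (real t * real ?w))"
    using add_pos_nonneg[of 1 "1 / real T"] by simp
  also have "\<dots> \<le> (1 + 1 / real T)^2 * real n / (real k)^2"
    using k_sq assms(3) \<open>0 < t\<close> w_pos by (intro divide_left_mono mult_pos_pos) auto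
  also have "real M / real ?w \<le> real M"
    using assms(5) by (simp add: divide_le_eq mult_le_cancel_left1)
  finally show ?thesis
    by (simp add: M_def)
qed

lemma chromatic_div_clique_number_le:
  fixes W :: real
  assumes G: "graph_on n E" and "0 < n" "0 < t" "0 < k" "0 < T" "0 < W"
    and "\<forall>s t. 0 < s \<longrightarrow> 0 < t \<longrightarrow> s * t \<le> k^2 \<longrightarrow> ramsey_number s t \<le> ramsey_number k k"
  shows "real (chromatic_number n E) / real (clique_number n E)
    \<le> max (real n / W) (max (real n / real t + real ((T + 1 + t) ^ (T + 1)))
         ((1 + 1 / real T)^2 * real n / (real k)^2 + real (ramsey_number k k) + (W + 1 + T) ^ T))"
    (is "?ratio \<le> max ?large (max ?small ?medium)")
proof -
  let ?w = "clique_number n E"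
  consider "W \<le> real ?w" | "?w \<le> T" | "T < ?w" "real ?w < W"
    by linarith
  then show ?thesis
  proof cases
    case 1
    then have "?ratio \<le> real n / real ?w"
      using chromatic_number_le_card[OF G] clique_number_pos[OF assms(2), of E]
      by (intro divide_right_mono) auto
    also have "\<dots> \<le> ?large"
      using 1 assms(6) by (intro divide_left_mono) auto
    finally show ?thesis
      by simp
  next
    case 2
    then show ?thesis
      using chromatic_div_clique_number_le_small_clique[OF G assms(2,3)] by fastforce
  next
    case 3
    have "real ((?w + 1 + T) ^ T) \<le> (W + 1 + T) ^ T"
      using 3(2) by (simp add: power_mono)
    then show ?thesis
      using chromatic_div_clique_number_le_medium_clique[OF G assms(2,4,5) 3(1) assms(7)] by fastforce
  qed
qed

lemma scaled_f_ratio_le: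
  fixes A :: real
  assumes "1 < n" "0 < k" "0 < T" "0 < A"
    and "\<forall>s t. 0 < s \<longrightarrow> 0 < t \<longrightarrow> s * t \<le> k^2 \<longrightarrow> ramsey_number s t \<le> ramsey_number k k"
  defines "x \<equiv> log 2 (real n)"
  shows "x^2 / real n * f_ratio n
    \<le> max A (max (x^2 / (real k)^3 + x^2 * real ((T + 1 + k^3) ^ (T + 1)) / real n)
         ((1 + 1 / real T)^2 * x^2 / (real k)^2 + x^2 * real (ramsey_number k k) / real n
           + x^2 * (x^2 / A + 1 + T) ^ T / real n))"
    (is "_ \<le> max A (max ?small ?medium)")
proof -
  have "0 < x"
    using assms(1) by (simp add: x_def)
  obtain E where G: "graph_on n E"
    and f_eq: "f_ratio n = real (chromatic_number n E) / real (clique_number n E)"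
    using f_ratio_attained by blast
  have "f_ratio n \<le> max (real n / (x^2 / A)) (max (real n / real (k^3) + real ((T + 1 + k^3) ^ (T + 1)))
      ((1 + 1 / real T)^2 * real n / (real k)^2 + real (ramsey_number k k) + (x^2 / A + 1 + T) ^ T))"
    unfolding f_eq using assms(1-5) \<open>0 < x\<close>
    by (intro chromatic_div_clique_number_le[OF G]) auto
  then have "x^2 / real n * f_ratio n \<le> x^2 / real n * max (real n / (x^2 / A))
      (max (real n / real (k^3) + real ((T + 1 + k^3) ^ (T + 1)))
      ((1 + 1 / real T)^2 * real n / (real k)^2 + real (ramsey_number k k) + (x^2 / A + 1 + T) ^ T))"
    by (rule mult_left_mono) simp
  also have "\<dots> = max (x^2 / real n * (real n / (x^2 / A)))
      (max (x^2 / real n * (real n / real (k^3) + real ((T + 1 + k^3) ^ (T + 1))))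
      (x^2 / real n * ((1 + 1 / real T)^2 * real n / (real k)^2 + real (ramsey_number k k)
         + (x^2 / A + 1 + T) ^ T)))"
    by (simp add: max_mult_distrib_left)
  also have "\<dots> = max A (max ?small ?medium)"
    using assms(1,4) \<open>0 < x\<close> by (simp add: field_simps)
  finally show ?thesis .
qed

section \<open>Asymptotics\<close>

lemma ramsey_exponent_nonneg:
  assumes "(\<lambda>k. log 2 (real (ramsey_number k k)) / real k) \<longlonglongrightarrow> L"
  shows "0 \<le> L"
proof (rule LIMSEQ_le_const[OF assms], intro exI allI impI)
  fix k :: nat
  assume "1 \<le> k"
  then have "1 \<le> real (ramsey_number k k)"
    using ramsey_number_diag_ge[of k] by simp
  then show "0 \<le> log 2 (real (ramsey_number k k)) / real k"
    by simp
qed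

lemma eventually_ramsey_number_diag_le_powr:
  assumes "(\<lambda>k. log 2 (real (ramsey_number k k)) / real k) \<longlonglongrightarrow> L" "L < c"
  shows "\<forall>\<^sub>F k in sequentially. real (ramsey_number k k) \<le> 2 powr (c * real k)"
  using order_tendstoD(2)[OF assms] eventually_gt_at_top[of 0]
proof eventually_elim
  case (elim k)
  then have "0 < real (ramsey_number k k)"
    using ramsey_number_diag_ge[of k] by simp
  moreover have "log 2 (real (ramsey_number k k)) \<le> c * real k"
    using elim by (simp add: divide_less_eq)
  ultimately show ?case
    by (simp add: log_le_iff)
qed

definition diag_ramsey_index :: "nat \<Rightarrow> nat" where
  "diag_ramsey_index n = Max {k. ramsey_number k k \<le> n}"

lemma finite_diag_ramsey_le: "finite {k. ramsey_number k k \<le> n}"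
  by (rule finite_subset[of _ "{..n}"]) (auto intro: order_trans[OF ramsey_number_diag_ge])

lemma le_diag_ramsey_index: "ramsey_number k k \<le> n \<Longrightarrow> k \<le> diag_ramsey_index n"
  unfolding diag_ramsey_index_def using finite_diag_ramsey_le by (intro Max_ge) auto

lemma ramsey_number_diag_ramsey_index_le:
  assumes "1 \<le> n"
  shows "ramsey_number (diag_ramsey_index n) (diag_ramsey_index n) \<le> n"
proof -
  have "ramsey_number 0 0 \<le> n"
    using ramsey_number_le_binomial[of 0 0] assms by simp
  then have "diag_ramsey_index n \<in> {k. ramsey_number k k \<le> n}"
    unfolding diag_ramsey_index_def using finite_diag_ramsey_le by (intro Max_in) auto
  then show ?thesis
    by simp
qed

lemma less_ramsey_number_Suc_diag_ramsey_index:
  "n < ramsey_number (Suc (diag_ramsey_index n)) (Suc (diag_ramsey_index n))"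
  using le_diag_ramsey_index[of "Suc (diag_ramsey_index n)" n] by (meson Suc_n_not_le_n not_le)

lemma filterlim_diag_ramsey_index: "filterlim diag_ramsey_index at_top sequentially"
  unfolding filterlim_at_top eventually_sequentially using le_diag_ramsey_index by blast

lemma scaled_f_ratio_ge_diag_ramsey_index:
  fixes n :: nat
  defines "k \<equiv> diag_ramsey_index n"
  assumes "1 \<le> n" "1 \<le> k"
  shows "(log 2 (real (ramsey_number k k)) / real k)^2 \<le> (log 2 (real n))^2 / real n * f_ratio n"
proof -
  have "1 \<le> real (ramsey_number k k)" "real (ramsey_number k k) \<le> real n"
    using ramsey_number_diag_ge[of k] assms(3) ramsey_number_diag_ramsey_index_le[OF assms(2)]
    by (auto simp: k_def)
  then have "(log 2 (real (ramsey_number k k)) / real k)^2 \<le> (log 2 (real n))^2 / (real k)^2"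
    by (simp add: power_divide power_mono divide_right_mono)
  also have "\<dots> = (log 2 (real n))^2 / real n * (real n / (real k)^2)"
    using assms(2) by simp
  also have "\<dots> \<le> (log 2 (real n))^2 / real n * f_ratio n"
    using assms less_ramsey_number_Suc_diag_ramsey_index[of n]
    by (intro mult_left_mono f_ratio_ge_below_ramsey_number) auto
  finally show ?thesis .
qed

lemma scaled_f_ratio_eventually_greater:
  assumes lim: "(\<lambda>k. log 2 (real (ramsey_number k k)) / real k) \<longlonglongrightarrow> L" and "a < L^2"
  shows "\<forall>\<^sub>F n in sequentially. a < (log 2 (real n))^2 / real n * f_ratio n"
proof -
  let ?k = diag_ramsey_index
  have "(\<lambda>n. (log 2 (real (ramsey_number (?k n) (?k n))) / real (?k n))^2) \<longlonglongrightarrow> L^2"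
    by (intro tendsto_power filterlim_compose[OF lim filterlim_diag_ramsey_index])
  then have "\<forall>\<^sub>F n in sequentially. a < (log 2 (real (ramsey_number (?k n) (?k n))) / real (?k n))^2"
    using assms(2) by (rule order_tendstoD(1))
  moreover have "\<forall>\<^sub>F n in sequentially. 1 \<le> ?k n"
    using filterlim_diag_ramsey_index by (simp add: filterlim_at_top)
  ultimately show ?thesis
    using eventually_ge_at_top[of 1]
    by eventually_elim (use scaled_f_ratio_ge_diag_ramsey_index in fastforce)
qed

text \<open>The bounds of \<open>scaled_f_ratio_le\<close> for \<open>\<omega> \<le> T\<close> and \<open>T < \<omega>\<close>, with \<open>k\<close> replaced by
  \<open>\<theta> log n \<ge> k \<ge> \<theta> log n - 1\<close> and \<open>R(k, k)\<close> by \<open>n\<^bsup>e\<^esup>\<close>.\<close>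
definition small_clique_term :: "real \<Rightarrow> nat \<Rightarrow> nat \<Rightarrow> real" where
  "small_clique_term \<theta> T n =
     (let x = log 2 (real n) in x^2 / (\<theta> * x - 1)^3 + x^2 * (real T + 1 + (\<theta> * x)^3) ^ (T + 1) / real n)"

definition medium_clique_term :: "real \<Rightarrow> real \<Rightarrow> real \<Rightarrow> nat \<Rightarrow> nat \<Rightarrow> real" where
  "medium_clique_term \<theta> A e T n =
     (let x = log 2 (real n) in (1 + 1 / real T)^2 * x^2 / (\<theta> * x - 1)^2
        + x^2 * real n powr e / real n + x^2 * (x^2 / A + 1 + T) ^ T / real n)"

lemma small_clique_term_tendsto: "0 < \<theta> \<Longrightarrow> small_clique_term \<theta> T \<longlonglongrightarrow> 0"
  unfolding small_clique_term_def Let_def by real_asymp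

lemma medium_clique_term_tendsto:
  assumes "0 < \<theta>" "0 < A" "e < 1"
  shows "medium_clique_term \<theta> A e T \<longlonglongrightarrow> (1 + 1 / real T)^2 / \<theta>^2"
  unfolding medium_clique_term_def Let_def using assms by (real_asymp simp: field_simps)

lemma scaled_f_ratio_le_log:
  fixes \<theta> A c :: real
  assumes "1 < n" "0 < T" "0 < A" "0 \<le> c"
  defines "x \<equiv> log 2 (real n)" and "k \<equiv> nat \<lfloor>\<theta> * log 2 (real n)\<rfloor>"
  assumes "2 \<le> \<theta> * x" and "real (ramsey_number k k) \<le> 2 powr (c * real k)"
    and "\<forall>s t. 0 < s \<longrightarrow> 0 < t \<longrightarrow> s * t \<le> k^2 \<longrightarrow> ramsey_number s t \<le> ramsey_number k k"
  shows "x^2 / real n * f_ratio n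
    \<le> max A (max (small_clique_term \<theta> T n) (medium_clique_term \<theta> A (c * \<theta>) T n))"
proof -
  have k_ge: "\<theta> * x - 1 \<le> real k" and k_le: "real k \<le> \<theta> * x"
    unfolding k_def x_def using assms(7) of_nat_floor[of "\<theta> * x"] by (simp_all add: x_def)
  then have "0 < k"
    using assms(7) by simp
  have "real (ramsey_number k k) \<le> 2 powr (c * (\<theta> * x))"
    using assms(8) k_le \<open>0 \<le> c\<close> by (meson mult_left_mono order.trans powr_mono one_le_numeral)
  also have "\<dots> = (2 powr x) powr (c * \<theta>)"
    by (simp add: powr_powr ac_simps)
  also have "\<dots> = real n powr (c * \<theta>)"
    using assms(1) by (simp add: x_def)
  finally have ramsey_k: "real (ramsey_number k k) \<le> real n powr (c * \<theta>)" .
  have "real ((T + 1 + k^3) ^ (T + 1)) = (real T + 1 + (real k)^3) ^ (T + 1)"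
    by (simp only: of_nat_power of_nat_add of_nat_1)
  also have "\<dots> \<le> (real T + 1 + (\<theta> * x)^3) ^ (T + 1)"
    using k_le by (intro power_mono add_left_mono) auto
  finally have power_le: "real ((T + 1 + k^3) ^ (T + 1)) \<le> (real T + 1 + (\<theta> * x)^3) ^ (T + 1)" .
  have "x^2 / real n * f_ratio n
      \<le> max A (max (x^2 / (real k)^3 + x^2 * real ((T + 1 + k^3) ^ (T + 1)) / real n)
         ((1 + 1 / real T)^2 * x^2 / (real k)^2 + x^2 * real (ramsey_number k k) / real n
           + x^2 * (x^2 / A + 1 + T) ^ T / real n))"
    unfolding x_def using assms(1-3,9) \<open>0 < k\<close> by (intro scaled_f_ratio_le) auto
  also have "\<dots> \<le> max A (max (small_clique_term \<theta> T n) (medium_clique_term \<theta> A (c * \<theta>) T n))"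
    unfolding small_clique_term_def medium_clique_term_def Let_def x_def[symmetric]
    using k_ge assms(7) power_le ramsey_k
    by (intro max.mono add_mono order.refl divide_left_mono divide_right_mono power_mono
        mult_left_mono mult_pos_pos) auto
  finally show ?thesis .
qed

text \<open>With \<open>k = \<lfloor>\<theta> log n\<rfloor>\<close> and \<open>c \<theta> = 1 - 1/T\<close> we get \<open>R(k, k) \<le> 2\<^bsup>c k\<^esup> \<le> n\<^bsup>1 - 1/T\<^esup>\<close>.\<close>
lemma scaled_f_ratio_eventually_less_of_growth:
  fixes c a :: real
  assumes ramsey_le_diagonal: "\<forall>s t k :: nat. 0 < s \<longrightarrow> 0 < t \<longrightarrow> 0 < k \<longrightarrow> s * t \<le> k ^ 2 \<longrightarrow>
      ramsey_number s t \<le> ramsey_number k k"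
    and growth: "\<forall>\<^sub>F j in sequentially. real (ramsey_number j j) \<le> 2 powr (c * real j)"
    and "0 < c" "2 \<le> T" "((1 + 1 / real T) * c / (1 - 1 / real T))^2 < a"
  shows "\<forall>\<^sub>F n in sequentially. (log 2 (real n))^2 / real n * f_ratio n < a"
proof -
  define \<theta> where "\<theta> = (1 - 1 / real T) / c"
  define A where "A = a / 2"
  have "0 < 1 - 1 / real T"
    using \<open>2 \<le> T\<close> by (simp add: field_simps)
  then have "0 < \<theta>" "c * \<theta> < 1" "(1 + 1 / real T)^2 / \<theta>^2 < a"
    using assms(3-5) by (simp_all add: \<theta>_def power_divide power_mult_distrib)
  have "0 < a"
    using le_less_trans[OF _ \<open>(1 + 1 / real T)^2 / \<theta>^2 < a\<close>] by simp
  then have "0 < A" "A < a"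
    by (simp_all add: A_def)
  have \<theta>x_at_top: "filterlim (\<lambda>n. \<theta> * log 2 (real n)) at_top sequentially"
    using \<open>0 < \<theta>\<close> by real_asymp
  then have "filterlim (\<lambda>n. nat \<lfloor>\<theta> * log 2 (real n)\<rfloor>) at_top sequentially"
    by (rule filterlim_compose[OF filterlim_nat_sequentially filterlim_compose[OF filterlim_floor_sequentially]])
  with growth have "\<forall>\<^sub>F n in sequentially. real (ramsey_number (nat \<lfloor>\<theta> * log 2 (real n)\<rfloor>) (nat \<lfloor>\<theta> * log 2 (real n)\<rfloor>))
      \<le> 2 powr (c * real (nat \<lfloor>\<theta> * log 2 (real n)\<rfloor>))"
    by (rule eventually_compose_filterlim)
  moreover have "\<forall>\<^sub>F n in sequentially. 2 \<le> \<theta> * log 2 (real n)"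
    using \<theta>x_at_top by (simp add: filterlim_at_top)
  moreover have "\<forall>\<^sub>F n in sequentially. small_clique_term \<theta> T n < a"
    using small_clique_term_tendsto[OF \<open>0 < \<theta>\<close>] \<open>0 < a\<close> by (rule order_tendstoD(2))
  moreover have "\<forall>\<^sub>F n in sequentially. medium_clique_term \<theta> A (c * \<theta>) T n < a"
    using medium_clique_term_tendsto[OF \<open>0 < \<theta>\<close> \<open>0 < A\<close> \<open>c * \<theta> < 1\<close>]
      \<open>(1 + 1 / real T)^2 / \<theta>^2 < a\<close> by (rule order_tendstoD(2))
  ultimately show ?thesis
    using eventually_gt_at_top[of 1]
  proof eventually_elim
    case (elim n)
    then have "(log 2 (real n))^2 / real n * f_ratio n
        \<le> max A (max (small_clique_term \<theta> T n) (medium_clique_term \<theta> A (c * \<theta>) T n))"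
      using \<open>2 \<le> T\<close> \<open>0 < A\<close> \<open>0 < c\<close> ramsey_le_diagonal by (intro scaled_f_ratio_le_log) auto
    then show ?case
      using elim(3,4) \<open>A < a\<close> by simp
  qed
qed

lemma scaled_f_ratio_eventually_less:
  assumes "\<forall>s t k :: nat. 0 < s \<longrightarrow> 0 < t \<longrightarrow> 0 < k \<longrightarrow> s * t \<le> k ^ 2 \<longrightarrow>
      ramsey_number s t \<le> ramsey_number k k"
    and lim: "(\<lambda>k. log 2 (real (ramsey_number k k)) / real k) \<longlonglongrightarrow> L" and "L^2 < a"
  shows "\<forall>\<^sub>F n in sequentially. (log 2 (real n))^2 / real n * f_ratio n < a"
proof -
  have "(\<lambda>T. ((1 + 1 / real T) * (L + 1 / real T) / (1 - 1 / real T))^2) \<longlonglongrightarrow> L^2"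
    by (intro tendsto_eq_intros lim_inverse_n') auto
  then have "\<forall>\<^sub>F T in sequentially. ((1 + 1 / real T) * (L + 1 / real T) / (1 - 1 / real T))^2 < a \<and> 2 \<le> T"
    using assms(3) by (intro eventually_conj order_tendstoD(2) eventually_ge_at_top)
  then obtain T :: nat where "2 \<le> T" "((1 + 1 / real T) * (L + 1 / real T) / (1 - 1 / real T))^2 < a"
    using eventually_happens'[OF sequentially_bot] by blast
  moreover have "0 < L + 1 / real T"
    using ramsey_exponent_nonneg[OF lim] \<open>2 \<le> T\<close> by (simp add: add_nonneg_pos)
  moreover have "\<forall>\<^sub>F j in sequentially. real (ramsey_number j j) \<le> 2 powr ((L + 1 / real T) * real j)"
    using eventually_ramsey_number_diag_le_powr[OF lim] \<open>2 \<le> T\<close> by simp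
  ultimately show ?thesis
    using scaled_f_ratio_eventually_less_of_growth[OF assms(1)] by blast
qed

theorem theorem1p2:
  fixes L :: real
  assumes "\<forall>s t k :: nat. 0 < s \<longrightarrow> 0 < t \<longrightarrow> 0 < k \<longrightarrow> s * t \<le> k ^ 2 \<longrightarrow>
             ramsey_number s t \<le> ramsey_number k k"
    and "(\<lambda>k. log 2 (real (ramsey_number k k)) / real k) \<longlonglongrightarrow> L"
  shows "(\<lambda>n. (log 2 (real n))^2 / real n * f_ratio n) \<longlonglongrightarrow> L^2"
proof (rule order_tendstoI)
  fix a
  assume "a < L^2"
  then show "\<forall>\<^sub>F n in sequentially. a < (log 2 (real n))^2 / real n * f_ratio n"
    using scaled_f_ratio_eventually_greater[OF assms(2)] by blast
next
  fix a
  assume "L^2 < a"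
  then show "\<forall>\<^sub>F n in sequentially. (log 2 (real n))^2 / real n * f_ratio n < a"
    using scaled_f_ratio_eventually_less[OF assms] by blast
qed

end
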